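(* Let $X$ be a space and $p\in X$, and let $\{H_n:n\in\omega\}$ be a countable family of subsets of $X$ with $p\in\overline{\bigcup_{n\in\omega}H_n}$. If either (a) $X$ is strongly $L$-selective, or (b) $X$ is $L$-selective and every $H_n$ is closed, then there is a sequence of points of $\bigcup_{n\in\omega}H_n$ converging to $p$.
   Context: All spaces are assumed $T_1$. For spaces $Y$, $X$, a map $\varphi:Y\to\mathcal P(X)\setminus\{\emptyset\}$ is lower semicontinuous (l.s.c.) if $\{y:\varphi(y)\cap U\neq\emptyset\}$ is open in $Y$ for every open $U\subseteq X$; a selection is a map $f:Y\to X$ with $f(y)\in\varphi(y)$ for all $y$. $X$ is strongly $Y$-selective if every l.s.c. map $Y\to\mathcal P(X)\setminus\{\emptyset\}$ has a continuous selection, and $Y$-selective if every l.s.c. map from $Y$ to the nonempty closed subsets of $X$ has a continuous selection. (Strongly) $L$-selective means (strongly) $(\omega+1)$-selective, with $\omega+1$ carrying the order topology. *)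

theory Defs
  imports "HOL-Analysis.Analysis"
begin

definition lsc_map :: "'b topology \<Rightarrow> 'a topology \<Rightarrow> ('b \<Rightarrow> 'a set) \<Rightarrow> bool" where
  "lsc_map Y X \<phi> \<longleftrightarrow>
     (\<forall>y\<in>topspace Y. \<phi> y \<subseteq> topspace X \<and> \<phi> y \<noteq> {}) \<and>
     (\<forall>U. openin X U \<longrightarrow> openin Y {y \<in> topspace Y. \<phi> y \<inter> U \<noteq> {}})"

definition strongly_selective :: "'b topology \<Rightarrow> 'a topology \<Rightarrow> bool" where
  "strongly_selective Y X \<longleftrightarrow>
     (\<forall>\<phi>. lsc_map Y X \<phi> \<longrightarrow>
        (\<exists>f. continuous_map Y X f \<and> (\<forall>y\<in>topspace Y. f y \<in> \<phi> y)))"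

definition selective :: "'b topology \<Rightarrow> 'a topology \<Rightarrow> bool" where
  "selective Y X \<longleftrightarrow>
     (\<forall>\<phi>. lsc_map Y X \<phi> \<and> (\<forall>y\<in>topspace Y. closedin X (\<phi> y)) \<longrightarrow>
        (\<exists>f. continuous_map Y X f \<and> (\<forall>y\<in>topspace Y. f y \<in> \<phi> y)))"

text \<open>\<omega>+1 with the order topology is modelled by enat with its order topology.\<close>
definition strongly_L_selective :: "'a topology \<Rightarrow> bool" where
  "strongly_L_selective X \<longleftrightarrow> strongly_selective (euclidean :: enat topology) X"

definition L_selective :: "'a topology \<Rightarrow> bool" where
  "L_selective X \<longleftrightarrow> selective (euclidean :: enat topology) X"

end

theory Submission
  imports Defs
begin

text \<open>
  The point \<open>\<infinity>\<close> of \<open>\<omega>+1\<close> is sent to \<open>{p}\<close> and \<open>n\<close> to the finite union \<open>H 0 \<union> \<dots> \<union> H n\<close>.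
  This map is lower semicontinuous exactly because \<open>p\<close> lies in the closure of \<open>\<Union>n. H n\<close>:
  a neighbourhood of \<open>p\<close> meets some \<open>H m\<close>, hence every value at \<open>n \<ge> m\<close>.
  A continuous selection \<open>f\<close> then satisfies \<open>f \<infinity> = p\<close>, and \<open>f n\<close> is the required sequence.
  In the closed case the values are closed by the \<open>T\<^sub>1\<close> axiom; to make the value at \<open>0\<close>
  nonempty, a nonempty \<open>H N\<close> is first added to every \<open>H n\<close>.
\<close>

lemma limitin_enat_infinity: "limitin euclidean (\<lambda>k. enat k) \<infinity> sequentially"
  by (auto simp: nhds_enat filterlim_INF filterlim_principal eventually_sequentially
           intro: exI[of _ "Suc 0"])

definition approach_map :: "'a \<Rightarrow> (nat \<Rightarrow> 'a set) \<Rightarrow> enat \<Rightarrow> 'a set" where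
  "approach_map p H y = (case y of enat n \<Rightarrow> (\<Union>m\<le>n. H m) | \<infinity> \<Rightarrow> {p})"

lemma approach_map_enat [simp]: "approach_map p H (enat n) = (\<Union>m\<le>n. H m)"
  and approach_map_infinity [simp]: "approach_map p H \<infinity> = {p}"
  by (simp_all add: approach_map_def)

lemma lsc_map_approach_map:
  assumes "p \<in> topspace X" and "\<forall>n. H n \<subseteq> topspace X" and "H 0 \<noteq> {}"
    and "p \<in> X closure_of (\<Union>n. H n)"
  shows "lsc_map euclidean X (approach_map p H)"
  unfolding lsc_map_def
proof (intro conjI allI impI ballI)
  fix y :: enat
  show "approach_map p H y \<subseteq> topspace X" "approach_map p H y \<noteq> {}"
    using assms(1-3) by (cases y; force)+
next
  fix U assume U: "openin X U"
  let ?S = "{y \<in> topspace euclidean. approach_map p H y \<inter> U \<noteq> {}}"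
  have "\<exists>m::nat. {enat m<..} \<subseteq> ?S" if "\<infinity> \<in> ?S"
  proof -
    from that have "p \<in> U" by simp
    then obtain m x where x: "x \<in> U" "x \<in> H m"
      using assms(4) U by (auto simp: in_closure_of)
    have "approach_map p H y \<inter> U \<noteq> {}" if "y > enat m" for y
    proof (cases y)
      case (enat k)
      with that x show ?thesis by fastforce
    qed (use \<open>p \<in> U\<close> in simp)
    then show ?thesis by auto
  qed
  then show "openin euclidean ?S"
    by (simp add: open_enat_iff)
qed

lemma closedin_approach_map:
  assumes "t1_space X" and "p \<in> topspace X" and "\<forall>n. closedin X (H n)"
  shows "closedin X (approach_map p H y)"
proof (cases y)
  case (enat n)
  with assms(3) show ?thesis by (auto intro!: closedin_Union)
qed (use assms(1,2) in \<open>simp add: t1_space_closedin_singleton\<close>)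

lemma selection_of_approach_map_converges:
  assumes "continuous_map euclidean X f" and "\<forall>y. f y \<in> approach_map p H y"
  shows "(\<forall>k. f (enat k) \<in> (\<Union>n. H n)) \<and> limitin X (\<lambda>k. f (enat k)) p sequentially"
proof
  show "\<forall>k. f (enat k) \<in> (\<Union>n. H n)"
    using assms(2) by (metis UN_E UN_I approach_map_enat UNIV_I)
  have "f \<infinity> = p" using assms(2) by (metis approach_map_infinity singletonD)
  then show "limitin X (\<lambda>k. f (enat k)) p sequentially"
    using continuous_map_limit[OF assms(1) limitin_enat_infinity] by (simp add: o_def)
qed

theorem mainTheorem13:
  fixes X :: "'a topology" and p :: 'a and H :: "nat \<Rightarrow> 'a set"
  assumes "t1_space X"
    and "p \<in> topspace X"
    and "\<forall>n. H n \<subseteq> topspace X"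
    and "p \<in> X closure_of (\<Union>n. H n)"
    and "strongly_L_selective X \<or> (L_selective X \<and> (\<forall>n. closedin X (H n)))"
  shows "\<exists>s :: nat \<Rightarrow> 'a. (\<forall>k. s k \<in> (\<Union>n. H n)) \<and> limitin X s p sequentially"
proof -
  obtain N where "H N \<noteq> {}"
    using assms(4) by (metis SUP_bot_conv(2) closure_of_empty empty_iff)
  define H' where "H' n = H n \<union> H N" for n
  have same_union: "(\<Union>n. H' n) = (\<Union>n. H n)"
    unfolding H'_def by blast
  have lsc: "lsc_map euclidean X (approach_map p H')"
    using assms(2-4) \<open>H N \<noteq> {}\<close>
    by (intro lsc_map_approach_map) (auto simp: H'_def same_union)
  obtain f where "continuous_map euclidean X f" "\<forall>y. f y \<in> approach_map p H' y"
    using assms(5)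
  proof
    assume "strongly_L_selective X"
    then show ?thesis
      using lsc that unfolding strongly_L_selective_def strongly_selective_def by auto
  next
    assume "L_selective X \<and> (\<forall>n. closedin X (H n))"
    moreover have "closedin X (approach_map p H' y)" if "\<forall>n. closedin X (H n)" for y
      using assms(1,2) that by (intro closedin_approach_map) (auto simp: H'_def)
    ultimately show ?thesis
      using lsc that unfolding L_selective_def selective_def by auto
  qed
  then show ?thesis
    using selection_of_approach_map_converges same_union by metis
qed

end
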